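(* Let $s$ be a positive integer, let $\lambda,\eta,n$ be numbers, put $c(x)=\lambda x+\eta$, and let $h_{s,i,j}$ be as in the context. Then $$\sum_{i=0}^{s-1}c(n-i)^s\sum_{j'=i+1}^{s}h_{s,i,j'}+\sum_{i=s+1}^{2s}(-1)^s c(n-i)^s\sum_{j'=0}^{i-s-1}h_{s,2s-i,s-j'}=\Big[\frac1s\binom{2s}{s-1}-1\Big]\lambda^s(s+1)!.$$
   Context: For a fixed positive integer $s$, the numbers $h_{s,i,j}$ (integers $i\ge 0$, $j$) are defined recursively by: $h_{s,i,j}=0$ if $j\le i$; for $i=0$ and $j\ge 1$, $h_{s,0,j}=\binom{s+j-1}{j}\frac{s-j}{s}$; for $i>0$ and $j>i$, $h_{s,i,j}=-\frac{s-j+1}{i}h_{s,i-1,j-1}-\frac{j-i}{i}h_{s,i-1,j}$. *)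

theory Defs
  imports Complex_Main
begin

text \<open>The numbers h_{s,i,j}. All indices j that occur are nonnegative, so j is a natural number.\<close>
fun hcoef :: "nat \<Rightarrow> nat \<Rightarrow> nat \<Rightarrow> real" where
  "hcoef s i j =
     (if j \<le> i then 0
      else if i = 0 then real ((s + j - 1) choose j) * (real s - real j) / real s
      else - ((real s - real j + 1) / real i) * hcoef s (i - 1) (j - 1)
           - ((real j - real i) / real i) * hcoef s (i - 1) j)"

end

(* The row sums T i = \<Sum>j\<le>s. h s i j satisfy i T i = -(s - i) T (i - 1): shifting j in the
   recursion for h produces a boundary term at j = s + 1, which carries the factor s - j + 1 = 0.
   Hence T i = (-1)^i C(s-1,i) T 0, and the hockey-stick identity gives T 0 = C(2s,s-1)/s - 1.
   Both sums of the theorem thereby become T 0 times the (s-1)-st finite difference of the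
   degree-s polynomial k \<mapsto> c(x - k)^s, once at x = n and once at x = n - s - 1. That finite
   difference is affine in x with slope s! \<lambda>^(s-1), so the two contributions differ by
   s! \<lambda>^(s-1) (s+1) \<lambda> = \<lambda>^s (s+1)!. *)
theory Submission
  imports Defs
begin

(* (-1)^m times the m-th forward difference of k \<mapsto> (a + b k)^r at k = 0. *)
definition alt_binomial_sum :: "nat \<Rightarrow> nat \<Rightarrow> 'a::comm_ring_1 \<Rightarrow> 'a \<Rightarrow> 'a" where
  "alt_binomial_sum m r a b = (\<Sum>k\<le>m. (-1) ^ k * of_nat (m choose k) * (a + b * of_nat k) ^ r)"

lemma alt_binomial_sum_Suc_Suc:
  "alt_binomial_sum (Suc m) (Suc r) a b
     = a * alt_binomial_sum (Suc m) r a b - of_nat (Suc m) * b * alt_binomial_sum m r (a + b) b"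
proof -
  have absorb: "(-1) ^ Suc k * of_nat (Suc m choose Suc k) * of_nat (Suc k) * (a + b * of_nat (Suc k)) ^ r
      = - of_nat (Suc m) * ((-1) ^ k * of_nat (m choose k) * (a + b + b * of_nat k) ^ r)" for k
  proof -
    have "of_nat (Suc m choose Suc k) * of_nat (Suc k) = (of_nat (Suc m) * of_nat (m choose k) :: 'a)"
      by (metis Suc_times_binomial_eq of_nat_mult)
    moreover have "a + b * of_nat (Suc k) = a + b + b * of_nat k"
      by (simp add: algebra_simps)
    ultimately show ?thesis
      by (simp del: binomial_Suc_Suc of_nat_Suc add: mult.assoc mult.left_commute add.assoc)
  qed
  have "alt_binomial_sum (Suc m) (Suc r) a b
      = a * alt_binomial_sum (Suc m) r a b
        + b * (\<Sum>k\<le>Suc m. (-1) ^ k * of_nat (Suc m choose k) * of_nat k * (a + b * of_nat k) ^ r)"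
    unfolding alt_binomial_sum_def sum_distrib_left sum.distrib[symmetric]
    by (intro sum.cong refl) (simp add: algebra_simps)
  also have "(\<Sum>k\<le>Suc m. (-1) ^ k * of_nat (Suc m choose k) * of_nat k * (a + b * of_nat k) ^ r)
      = - of_nat (Suc m) * alt_binomial_sum m r (a + b) b"
    unfolding sum.atMost_Suc_shift absorb alt_binomial_sum_def sum_distrib_left by simp
  finally show ?thesis
    by (simp add: algebra_simps)
qed

lemma alt_binomial_sum_low_degree:
  "r \<le> m \<Longrightarrow> alt_binomial_sum m r a b = (if r = m then fact m * (-b) ^ m else 0)"
proof (induction m arbitrary: r a)
  case 0
  thus ?case by (simp add: alt_binomial_sum_def)
next
  case (Suc m)
  note outer_IH = Suc.IH
  show ?case
    using Suc.prems
  proof (induction r)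
    case 0
    show ?case using choose_alternating_sum[of "Suc m", where 'a='a]
      by (simp add: alt_binomial_sum_def)
  next
    case (Suc r)
    thus ?case
      using outer_IH[of r "a + b"]
      by (simp add: alt_binomial_sum_Suc_Suc algebra_simps)
  qed
qed

lemma alt_binomial_sum_Suc_diff:
  "alt_binomial_sum m (Suc m) a b - alt_binomial_sum m (Suc m) a' b = fact (Suc m) * (-b) ^ m * (a - a')"
proof (induction m arbitrary: a a')
  case 0
  thus ?case by (simp add: alt_binomial_sum_def)
next
  case (Suc m)
  have "alt_binomial_sum (Suc m) (Suc (Suc m)) a b - alt_binomial_sum (Suc m) (Suc (Suc m)) a' b
      = (a - a') * (fact (Suc m) * (-b) ^ Suc m)
        - of_nat (Suc m) * b * (alt_binomial_sum m (Suc m) (a + b) b - alt_binomial_sum m (Suc m) (a' + b) b)"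
    by (simp add: alt_binomial_sum_Suc_Suc alt_binomial_sum_low_degree algebra_simps)
  also have "\<dots> = fact (Suc (Suc m)) * (-b) ^ Suc m * (a - a')"
    unfolding Suc.IH by (simp add: algebra_simps)
  finally show ?case .
qed

lemma binomial_Suc_mult: "(n choose Suc k) * Suc k = (n choose k) * (n - k)"
  using binomial_absorption[of k n] binomial_absorb_comp[of n k] by (simp add: mult.commute)

lemma of_nat_binomial_Suc_mult:
  "of_nat (n choose Suc k) * of_nat (Suc k) = (of_nat (n choose k) * (of_nat n - of_nat k) :: 'a::comm_ring_1)"
proof (cases "k \<le> n")
  case True
  then show ?thesis
    by (metis binomial_Suc_mult of_nat_diff of_nat_mult)
next
  case False
  then show ?thesis by (simp add: binomial_eq_0)
qed

lemma sum_mult_choose_lower: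
  "(\<Sum>j\<le>Suc n. j * ((r + j) choose j)) = Suc r * (Suc (Suc r + n) choose n)"
proof -
  have "(\<Sum>j\<le>Suc n. j * ((r + j) choose j)) = (\<Sum>j\<le>n. ((Suc r + j) choose Suc j) * Suc j)"
    unfolding sum.atMost_Suc_shift by (simp add: mult.commute)
  also have "\<dots> = Suc r * (\<Sum>j\<le>n. (Suc r + j) choose j)"
    unfolding binomial_Suc_mult sum_distrib_left by (simp add: mult.commute)
  also have "\<dots> = Suc r * (Suc (Suc r + n) choose n)"
    by (simp only: sum_choose_lower)
  finally show ?thesis .
qed

declare hcoef.simps [simp del]

lemma hcoef_eq_0: "j \<le> i \<Longrightarrow> hcoef s i j = 0"
  by (subst hcoef.simps) simp

lemma hcoef_0: "0 < j \<Longrightarrow> hcoef s 0 j = real ((s + j - 1) choose j) * (real s - real j) / real s"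
  by (subst hcoef.simps) simp

lemma hcoef_Suc:
  "real (Suc i) * hcoef s (Suc i) j
     = - (real s - real j + 1) * hcoef s i (j - 1) - (real j - real (Suc i)) * hcoef s i j"
proof (cases "j \<le> Suc i")
  case True
  then have "hcoef s i (j - 1) = 0" "(real j - real (Suc i)) * hcoef s i j = 0"
    by (auto simp: hcoef_eq_0 le_Suc_eq)
  with True show ?thesis by (simp add: hcoef_eq_0)
next
  case False
  then have "hcoef s (Suc i) j = - ((real s - real j + 1) / real (Suc i)) * hcoef s i (j - 1)
                               - ((real j - real (Suc i)) / real (Suc i)) * hcoef s i j"
    by (subst hcoef.simps) simp
  then show ?thesis
    by (simp add: right_diff_distrib del: of_nat_Suc) (simp add: algebra_simps)
qed

definition hcoef_row_sum :: "nat \<Rightarrow> nat \<Rightarrow> real" where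
  "hcoef_row_sum s i = (\<Sum>j\<le>s. hcoef s i j)"

lemma hcoef_row_sum_eq_tail: "(\<Sum>j = Suc i..s. hcoef s i j) = hcoef_row_sum s i"
  unfolding hcoef_row_sum_def
  by (rule sum.mono_neutral_left) (auto simp: hcoef_eq_0)

lemma hcoef_row_sum_eq_reflected_tail:
  assumes "i < s"
  shows "(\<Sum>j = 0..s - Suc i. hcoef s i (s - j)) = hcoef_row_sum s i"
proof -
  have "(\<Sum>j = 0..s - Suc i. hcoef s i (s - j)) = (\<Sum>j = Suc i..s. hcoef s i j)"
    by (rule sum.reindex_bij_witness[of _ "\<lambda>j. s - j" "\<lambda>j. s - j"]) (use assms in auto)
  then show ?thesis by (simp add: hcoef_row_sum_eq_tail)
qed

lemma hcoef_row_sum_Suc: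
  assumes "0 < s"
  shows "real (Suc i) * hcoef_row_sum s (Suc i) = - (real s - real (Suc i)) * hcoef_row_sum s i"
proof -
  obtain m where s: "s = Suc m" using assms by (cases s) auto
  have "(\<Sum>j\<le>s. (real s - real j + 1) * hcoef s i (j - 1)) = (\<Sum>j\<le>m. (real s - real j) * hcoef s i j)"
    unfolding s sum.atMost_Suc_shift by (simp add: hcoef_eq_0 algebra_simps)
  also have "\<dots> = (\<Sum>j\<le>s. (real s - real j) * hcoef s i j)"
    unfolding s by simp
  finally have shifted: "(\<Sum>j\<le>s. (real s - real j + 1) * hcoef s i (j - 1)) = (\<Sum>j\<le>s. (real s - real j) * hcoef s i j)" .
  have "real (Suc i) * hcoef_row_sum s (Suc i)
      = - (\<Sum>j\<le>s. (real s - real j + 1) * hcoef s i (j - 1)) - (\<Sum>j\<le>s. (real j - real (Suc i)) * hcoef s i j)"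
    unfolding hcoef_row_sum_def sum_distrib_left hcoef_Suc
    by (simp only: sum_subtractf sum_negf mult_minus_left)
  also have "\<dots> = - (real s - real (Suc i)) * hcoef_row_sum s i"
    unfolding shifted hcoef_row_sum_def sum_distrib_left
    by (simp add: sum_subtractf[symmetric] sum_negf[symmetric] algebra_simps)
  finally show ?thesis .
qed

lemma hcoef_row_sum_eq:
  assumes "0 < s"
  shows "hcoef_row_sum s i = (-1) ^ i * real (s - 1 choose i) * hcoef_row_sum s 0"
proof (induction i)
  case 0
  show ?case by simp
next
  case (Suc i)
  obtain m where s: "s = Suc m" using assms by (cases s) auto
  have "real (Suc i) * hcoef_row_sum s (Suc i) = - (real m - real i) * ((-1) ^ i * real (m choose i) * hcoef_row_sum s 0)"
    using hcoef_row_sum_Suc[OF assms, of i] Suc.IH by (simp add: s)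
  also have "\<dots> = - ((-1) ^ i * (real (m choose i) * (real m - real i)) * hcoef_row_sum s 0)"
    by (simp add: algebra_simps)
  also have "\<dots> = - ((-1) ^ i * (real (m choose Suc i) * real (Suc i)) * hcoef_row_sum s 0)"
    by (simp only: of_nat_binomial_Suc_mult)
  also have "\<dots> = real (Suc i) * ((-1) ^ Suc i * real (m choose Suc i) * hcoef_row_sum s 0)"
    by (simp del: of_nat_Suc)
  finally have "real (Suc i) * hcoef_row_sum s (Suc i)
      = real (Suc i) * ((-1) ^ Suc i * real (m choose Suc i) * hcoef_row_sum s 0)" .
  then show ?case
    by (simp only: mult_left_cancel[OF of_nat_neq_0] s diff_Suc_1)
qed

lemma hcoef_row_sum_0:
  assumes "0 < s"
  shows "hcoef_row_sum s 0 = real ((2 * s) choose (s - 1)) / real s - 1"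
proof -
  obtain m where s: "s = Suc m" using assms by (cases s) auto
  have h0: "hcoef s 0 j = real ((m + j) choose j) * (real s - real j) / real s - (if j = 0 then 1 else 0)" for j
    using assms by (cases "j = 0") (simp_all add: hcoef_eq_0 hcoef_0 s)
  have lower: "(\<Sum>j\<le>s. (m + j) choose j) = (2 * s) choose s"
    by (simp add: sum_choose_lower s mult_2)
  have weighted: "(\<Sum>j\<le>s. j * ((m + j) choose j)) = s * ((2 * s) choose m)"
    using sum_mult_choose_lower[of m m] by (simp add: s mult_2)
  have central: "real ((2 * s) choose s) * real s = real ((2 * s) choose m) * (real s + 1)"
  proof -
    have "((2 * s) choose s) * s = ((2 * s) choose m) * (s + 1)"
      using binomial_Suc_mult[of "2 * s" m] by (simp add: s mult_2)
    then have "real (((2 * s) choose s) * s) = real (((2 * s) choose m) * (s + 1))"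
      by (rule arg_cong)
    then show ?thesis by (simp add: algebra_simps)
  qed
  have "(\<Sum>j\<le>s. real ((m + j) choose j) * (real s - real j))
      = real s * (\<Sum>j\<le>s. real ((m + j) choose j)) - (\<Sum>j\<le>s. real j * real ((m + j) choose j))"
    by (simp add: sum_subtractf sum_distrib_left algebra_simps)
  also have "\<dots> = real s * (real ((2 * s) choose s) - real ((2 * s) choose m))"
    using arg_cong[OF lower, of real] arg_cong[OF weighted, of real]
    by (simp add: right_diff_distrib)
  finally have "hcoef_row_sum s 0 = real ((2 * s) choose s) - real ((2 * s) choose m) - 1"
    unfolding hcoef_row_sum_def h0 using assms
    by (simp add: sum_subtractf sum_divide_distrib[symmetric])
  also have "\<dots> = real ((2 * s) choose m) / real s - 1"
    using central assms by (simp add: field_simps)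
  finally show ?thesis by (simp add: s)
qed


lemma hcoef_tail_sum_weighted:
  fixes f :: "nat \<Rightarrow> real"
  assumes "0 < s"
  shows "(\<Sum>i = 0..s-1. f i * (\<Sum>j = i+1..s. hcoef s i j))
       = hcoef_row_sum s 0 * (\<Sum>i\<le>s-1. (-1) ^ i * real (s - 1 choose i) * f i)"
proof -
  have "f i * (\<Sum>j = i+1..s. hcoef s i j) = hcoef_row_sum s 0 * ((-1) ^ i * real (s - 1 choose i) * f i)" for i
    using hcoef_row_sum_eq[OF assms, of i] by (simp add: hcoef_row_sum_eq_tail)
  then show ?thesis
    by (simp add: atMost_atLeast0 sum_distrib_left)
qed

lemma hcoef_reflected_tail_sum_weighted:
  fixes f :: "nat \<Rightarrow> real"
  assumes "0 < s"
  shows "(\<Sum>i = s+1..2*s. (-1) ^ s * f i * (\<Sum>j = 0..i-s-1. hcoef s (2*s - i) (s - j)))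
       = - hcoef_row_sum s 0 * (\<Sum>k\<le>s-1. (-1) ^ k * real (s - 1 choose k) * f (s + 1 + k))"
proof -
  have "(\<Sum>i = s+1..2*s. (-1) ^ s * f i * (\<Sum>j = 0..i-s-1. hcoef s (2*s - i) (s - j)))
      = (\<Sum>k\<le>s-1. (-1) ^ s * f (s + 1 + k) * (\<Sum>j = 0..k. hcoef s (s - 1 - k) (s - j)))"
    by (rule sum.reindex_bij_witness[of _ "\<lambda>k. s + 1 + k" "\<lambda>i. i - s - 1"]) (use assms in \<open>auto simp: mult_2\<close>)
  also have "\<dots> = (\<Sum>k\<le>s-1. - hcoef_row_sum s 0 * ((-1) ^ k * real (s - 1 choose k) * f (s + 1 + k)))"
  proof (rule sum.cong[OF refl])
    fix k assume "k \<in> {..s-1}"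
    then have k: "k \<le> s - 1" by simp
    have tail: "(\<Sum>j = 0..k. hcoef s (s - 1 - k) (s - j))
        = (-1) ^ (s - 1 - k) * real (s - 1 choose k) * hcoef_row_sum s 0"
      using hcoef_row_sum_eq_reflected_tail[of "s - 1 - k" s] hcoef_row_sum_eq[OF assms, of "s - 1 - k"]
        binomial_symmetric[OF k] k assms
      by simp
    have "s + (s - 1 - k) = Suc (k + 2 * (s - 1 - k))"
      using k assms by linarith
    then have "odd (s + (s - 1 - k)) \<longleftrightarrow> even k"
      by simp
    then have sign: "(-1::real) ^ s * (-1) ^ (s - 1 - k) = - ((-1) ^ k)"
      unfolding power_add[symmetric] minus_one_power_iff by auto
    have "(-1) ^ s * f (s + 1 + k) * (\<Sum>j = 0..k. hcoef s (s - 1 - k) (s - j))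
        = ((-1) ^ s * (-1) ^ (s - 1 - k)) * (hcoef_row_sum s 0 * (real (s - 1 choose k) * f (s + 1 + k)))"
      unfolding tail by (simp only: mult_ac)
    then show "(-1) ^ s * f (s + 1 + k) * (\<Sum>j = 0..k. hcoef s (s - 1 - k) (s - j))
        = - hcoef_row_sum s 0 * ((-1) ^ k * real (s - 1 choose k) * f (s + 1 + k))"
      unfolding sign by (simp only: mult_ac mult_minus_left)
  qed
  finally show ?thesis
    by (simp only: sum_distrib_left)
qed

theorem proposition12:
  fixes s :: nat and lambda eta n :: real and c :: "real \<Rightarrow> real"
  assumes "s > 0"
    and "\<And>x. c x = lambda * x + eta"
  shows "(\<Sum>i = 0..s-1. c (n - real i) ^ s * (\<Sum>j' = i+1..s. hcoef s i j'))
       + (\<Sum>i = s+1..2*s. (-1) ^ s * c (n - real i) ^ s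
            * (\<Sum>j' = 0..i-s-1. hcoef s (2*s - i) (s - j')))
       = (1 / real s * real ((2*s) choose (s-1)) - 1) * lambda ^ s * fact (s+1)"
proof -
  define H where "H = hcoef_row_sum s 0"
  define D where "D a = alt_binomial_sum (s - 1) s a (- lambda)" for a
  have c_shift: "c (x - real (j + k)) = c (x - real j) + (- lambda) * real k" for x j k
    using assms(2) by (simp add: algebra_simps)
  have first: "(\<Sum>i = 0..s-1. c (n - real i) ^ s * (\<Sum>j' = i+1..s. hcoef s i j')) = H * D (c n)"
    using c_shift[of n 0] unfolding hcoef_tail_sum_weighted[OF assms(1)] H_def D_def alt_binomial_sum_def
    by simp
  have second: "(\<Sum>i = s+1..2*s. (-1) ^ s * c (n - real i) ^ s
            * (\<Sum>j' = 0..i-s-1. hcoef s (2*s - i) (s - j'))) = - H * D (c (n - real (s + 1)))"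
    unfolding hcoef_reflected_tail_sum_weighted[OF assms(1)] H_def D_def alt_binomial_sum_def c_shift ..
  have "D (c n) - D (c (n - real (s + 1))) = fact s * lambda ^ (s - 1) * (lambda * real (s + 1))"
    using alt_binomial_sum_Suc_diff[of "s - 1" "c n" "- lambda" "c (n - real (s + 1))"] assms(1)
      c_shift[of n 0 "s + 1"]
    by (simp add: D_def)
  also have "\<dots> = lambda ^ s * fact (s + 1)"
    using power_minus_mult[OF assms(1), of lambda] by (simp add: algebra_simps)
  finally have "D (c n) - D (c (n - real (s + 1))) = lambda ^ s * fact (s + 1)" .
  then have "H * D (c n) + - H * D (c (n - real (s + 1))) = H * (lambda ^ s * fact (s + 1))"
    by (simp flip: right_diff_distrib)
  then show ?thesis
    unfolding first second H_def hcoef_row_sum_0[OF assms(1)] by simp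
qed

end
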